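(* If $p_{i,n}\ge0$ for all $n\in\mathbb N$ and $i\in\{0,\dots,m_n\}$, then the unique bounded solution $F$ on $[0,1]$ of the system $$f\big(\hat\varphi^k(x)\big)=\tilde\beta_{i_{k+1}(x),k+1}+\tilde p_{i_{k+1}(x),k+1}\,f\big(\hat\varphi^{k+1}(x)\big),\quad x=\Delta^{-\tilde Q}_{i_1(x)i_2(x)\dots}\in[0,1],\ k=0,1,2,\dots,$$ namely $F(x)=\beta_{i_1(x),1}+\sum_{k\ge2}\tilde\beta_{i_k(x),k}\prod_{j=1}^{k-1}\tilde p_{i_j(x),j}$, is a continuous probability distribution function on $[0,1]$: $F(0)=0$, $F(1)=1$, $F$ is non-decreasing and continuous on $[0,1]$.
   Context: Let $(m_n)_{n\ge1}$ be finite nonnegative integers and $\tilde Q=\|q_{i,n}\|$ ($i\in\{0,\dots,m_n\}$) with $q_{i,n}>0$, $\sum_{i}q_{i,n}=1$ for all $n$, and $\prod_n q_{i_n,n}=0$ for every digit sequence $(i_n)$. Put $a_{0,n}=0$, $a_{i,n}=\sum_{l<i}q_{l,n}$; $\Delta^{\tilde Q}_{j_1j_2\dots}=a_{j_1,1}+\sum_{n\ge2}a_{j_n,n}\prod_{l<n}q_{j_l,l}$. The nega-$\tilde Q$-representation $x=\Delta^{-\tilde Q}_{i_1i_2\dots}$ means $x=\Delta^{\tilde Q}_{i_1[m_2-i_2]i_3[m_4-i_4]\dots}$; every $x\in[0,1]$ has one. Shift operator: if $y=\Delta^{\tilde Q}_{j_1j_2\dots}$ then $\hat\varphi^k(y)=a_{j_{k+1},k+1}+\sum_{n\ge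 k+2}a_{j_n,n}\prod_{l=k+1}^{n-1}q_{j_l,l}$ ($\hat\varphi^0=\mathrm{id}$). Let $P=\|p_{i,n}\|$ have the same shape with $p_{i,n}\in(-1,1)$, $\sum_ip_{i,n}=1$, $\prod_n|p_{i_n,n}|=0$ for every digit sequence, $0<\sum_{i<c}p_{i,n}<1$ for $c\in\{1,\dots,m_n\}$. Put $\beta_{0,n}=0$, $\beta_{c,n}=\sum_{i<c}p_{i,n}$; for odd $n$: $\tilde p_{i,n}=p_{i,n}$, $\tilde\beta_{i,n}=\beta_{i,n}$; for even $n$: $\tilde p_{i,n}=p_{m_n-i,n}$, $\tilde\beta_{i,n}=\beta_{m_n-i,n}$. *)

theory Defs
  imports "HOL-Analysis.Analysis"
begin

text \<open>Conventions: columns are indexed by n \<ge> 1; an entry of a matrix is written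
  q i n (digit i, column n); m n is the largest digit in column n.\<close>

definition admissible :: "(nat \<Rightarrow> nat) \<Rightarrow> (nat \<Rightarrow> nat) \<Rightarrow> bool" where
  "admissible m d \<longleftrightarrow> (\<forall>n\<ge>1. d n \<le> m n)"

definition Qmatrix :: "(nat \<Rightarrow> nat) \<Rightarrow> (nat \<Rightarrow> nat \<Rightarrow> real) \<Rightarrow> bool" where
  "Qmatrix m q \<longleftrightarrow>
     (\<forall>n\<ge>1. \<forall>i\<le>m n. q i n > 0) \<and>
     (\<forall>n\<ge>1. (\<Sum>i\<le>m n. q i n) = 1) \<and>
     (\<forall>d. admissible m d \<longrightarrow> (\<lambda>N. \<Prod>n\<in>{1..N}. q (d n) n) \<longlonglongrightarrow> 0)"

definition Pmatrix :: "(nat \<Rightarrow> nat) \<Rightarrow> (nat \<Rightarrow> nat \<Rightarrow> real) \<Rightarrow> bool" where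
  "Pmatrix m p \<longleftrightarrow>
     (\<forall>n\<ge>1. \<forall>i\<le>m n. -1 < p i n \<and> p i n < 1) \<and>
     (\<forall>n\<ge>1. (\<Sum>i\<le>m n. p i n) = 1) \<and>
     (\<forall>d. admissible m d \<longrightarrow> (\<lambda>N. \<Prod>n\<in>{1..N}. \<bar>p (d n) n\<bar>) \<longlonglongrightarrow> 0) \<and>
     (\<forall>n\<ge>1. \<forall>c\<in>{1..m n}. 0 < (\<Sum>i<c. p i n) \<and> (\<Sum>i<c. p i n) < 1)"

definition acoef :: "(nat \<Rightarrow> nat \<Rightarrow> real) \<Rightarrow> nat \<Rightarrow> nat \<Rightarrow> real" where
  "acoef q i n = (\<Sum>l<i. q l n)"

definition DeltaQ :: "(nat \<Rightarrow> nat \<Rightarrow> real) \<Rightarrow> (nat \<Rightarrow> nat) \<Rightarrow> real" where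
  "DeltaQ q j = (\<Sum>k. acoef q (j (k+1)) (k+1) * (\<Prod>l\<in>{1..k}. q (j l) l))"

text \<open>x = Delta^{-Q}_{i_1 i_2 ...}: digits in even positions are reflected.\<close>
definition nega_rep :: "(nat \<Rightarrow> nat) \<Rightarrow> (nat \<Rightarrow> nat \<Rightarrow> real) \<Rightarrow> real \<Rightarrow> (nat \<Rightarrow> nat) \<Rightarrow> bool" where
  "nega_rep m q x i \<longleftrightarrow> admissible m i \<and>
     x = DeltaQ q (\<lambda>n. if even n then m n - i n else i n)"

definition beta :: "(nat \<Rightarrow> nat \<Rightarrow> real) \<Rightarrow> nat \<Rightarrow> nat \<Rightarrow> real" where
  "beta p c n = (\<Sum>i<c. p i n)"

definition ptilde :: "(nat \<Rightarrow> nat) \<Rightarrow> (nat \<Rightarrow> nat \<Rightarrow> real) \<Rightarrow> nat \<Rightarrow> nat \<Rightarrow> real" where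
  "ptilde m p i n = (if odd n then p i n else p (m n - i) n)"

definition betatilde :: "(nat \<Rightarrow> nat) \<Rightarrow> (nat \<Rightarrow> nat \<Rightarrow> real) \<Rightarrow> nat \<Rightarrow> nat \<Rightarrow> real" where
  "betatilde m p i n = (if odd n then beta p i n else beta p (m n - i) n)"

text \<open>The k-th term of the series
  F(x) = beta_{i_1,1} + sum_{k\<ge>2} betatilde_{i_k,k} prod_{j<k} ptilde_{i_j,j}
  (term number 0 is beta_{i_1,1} = betatilde_{i_1,1}, as 1 is odd).\<close>
definition Fterm :: "(nat \<Rightarrow> nat) \<Rightarrow> (nat \<Rightarrow> nat \<Rightarrow> real) \<Rightarrow> (nat \<Rightarrow> nat) \<Rightarrow> nat \<Rightarrow> real" where
  "Fterm m p i k = betatilde m p (i (k+1)) (k+1) * (\<Prod>j\<in>{1..k}. ptilde m p (i j) j)"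

end

theory Submission
  imports Defs
begin

text \<open>Reflecting the even digits of a nega-representation i gives a digit sequence r with
  x = Delta^Q(r), and the series defining F(x) is exactly the expansion Delta^P(r) of the same
  digits with respect to P; so F = Delta^P \<circ> (Delta^Q)\<inverse>. Both expansions respect the
  lexicographic order of digit sequences, and since the entries of Q are positive the only
  sequences that Delta^Q identifies are pairs  i m m m ...  and  (i+1) 0 0 0 ...  (after a common
  prefix), which Delta^P identifies as well. Hence F is well defined and non-decreasing; as every
  point of [0, 1] has a greedy expansion with respect to P, F maps [0, 1] onto [0, 1], and a
  monotone map of an interval onto an interval is continuous.\<close>

abbreviation prefix_weight :: "(nat \<Rightarrow> nat \<Rightarrow> real) \<Rightarrow> (nat \<Rightarrow> nat) \<Rightarrow> nat \<Rightarrow> real" where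
  "prefix_weight w j k \<equiv> \<Prod>l\<in>{1..k}. w (j l) l"

definition stochastic_matrix :: "(nat \<Rightarrow> nat) \<Rightarrow> (nat \<Rightarrow> nat \<Rightarrow> real) \<Rightarrow> bool" where
  "stochastic_matrix m w \<longleftrightarrow>
     (\<forall>n\<ge>1. \<forall>i\<le>m n. 0 \<le> w i n) \<and>
     (\<forall>n\<ge>1. (\<Sum>i\<le>m n. w i n) = 1) \<and>
     (\<forall>d. admissible m d \<longrightarrow> prefix_weight w d \<longlonglongrightarrow> 0)"

definition positive_matrix :: "(nat \<Rightarrow> nat) \<Rightarrow> (nat \<Rightarrow> nat \<Rightarrow> real) \<Rightarrow> bool" where
  "positive_matrix m w \<longleftrightarrow> (\<forall>n\<ge>1. \<forall>i\<le>m n. 0 < w i n)"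

abbreviation shift_digits :: "nat \<Rightarrow> (nat \<Rightarrow> nat) \<Rightarrow> nat \<Rightarrow> nat" where
  "shift_digits k j \<equiv> \<lambda>n. j (n + k)"

abbreviation shift_matrix :: "nat \<Rightarrow> (nat \<Rightarrow> nat \<Rightarrow> real) \<Rightarrow> nat \<Rightarrow> nat \<Rightarrow> real" where
  "shift_matrix k w \<equiv> \<lambda>i n. w i (n + k)"

definition DeltaQ_term :: "(nat \<Rightarrow> nat \<Rightarrow> real) \<Rightarrow> (nat \<Rightarrow> nat) \<Rightarrow> nat \<Rightarrow> real" where
  "DeltaQ_term w j k = acoef w (j (k + 1)) (k + 1) * prefix_weight w j k"

lemma DeltaQ_eq_suminf: "DeltaQ w j = suminf (DeltaQ_term w j)"
  unfolding DeltaQ_def DeltaQ_term_def by simp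

lemma admissibleD: "admissible m j \<Longrightarrow> 1 \<le> n \<Longrightarrow> j n \<le> m n"
  unfolding admissible_def by blast

lemma acoef_0 [simp]: "acoef w 0 n = 0"
  by (simp add: acoef_def)

lemma acoef_Suc: "acoef w (Suc i) n = acoef w i n + w i n"
  by (simp add: acoef_def)

lemma Qmatrix_iff: "Qmatrix m q \<longleftrightarrow> stochastic_matrix m q \<and> positive_matrix m q"
  unfolding Qmatrix_def stochastic_matrix_def positive_matrix_def by (auto intro: less_imp_le)

lemma Pmatrix_imp_stochastic_matrix:
  assumes P: "Pmatrix m p" and nonneg: "\<forall>n\<ge>1. \<forall>i\<le>m n. 0 \<le> p i n"
  shows "stochastic_matrix m p"
proof -
  have "(\<Prod>n\<in>{1..N}. \<bar>p (d n) n\<bar>) = (\<Prod>n\<in>{1..N}. p (d n) n)" if "admissible m d" for d N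
    using nonneg that by (intro prod.cong) (auto dest: admissibleD)
  then show ?thesis
    using P nonneg unfolding Pmatrix_def stochastic_matrix_def by simp
qed

context
  fixes m :: "nat \<Rightarrow> nat" and w :: "nat \<Rightarrow> nat \<Rightarrow> real"
  assumes stochastic: "stochastic_matrix m w"
begin

lemma stochastic_matrix_nonneg: "1 \<le> n \<Longrightarrow> i \<le> m n \<Longrightarrow> 0 \<le> w i n"
  using stochastic unfolding stochastic_matrix_def by blast

lemma stochastic_matrix_prefix_weight_tendsto:
  "admissible m j \<Longrightarrow> (\<lambda>N. prefix_weight w j N) \<longlonglongrightarrow> 0"
  using stochastic unfolding stochastic_matrix_def by blast

lemma stochastic_matrix_ex_pos:
  assumes "1 \<le> n"
  shows "\<exists>i\<le>m n. 0 < w i n"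
proof (rule ccontr)
  assume "\<not> ?thesis"
  then have "(\<Sum>i\<le>m n. w i n) = 0"
    using stochastic_matrix_nonneg[OF assms] by (intro sum.neutral) (auto intro: antisym simp: not_less)
  then show False
    using stochastic assms unfolding stochastic_matrix_def by simp
qed

lemma prefix_weight_nonneg: "admissible m j \<Longrightarrow> 0 \<le> prefix_weight w j N"
  by (intro prod_nonneg) (simp add: stochastic_matrix_nonneg admissibleD)

lemma acoef_mono: "1 \<le> n \<Longrightarrow> i \<le> i' \<Longrightarrow> i' \<le> Suc (m n) \<Longrightarrow> acoef w i n \<le> acoef w i' n"
  unfolding acoef_def by (intro sum_mono2) (auto intro: stochastic_matrix_nonneg)

lemma acoef_nonneg: "1 \<le> n \<Longrightarrow> i \<le> Suc (m n) \<Longrightarrow> 0 \<le> acoef w i n"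
  using acoef_mono[of n 0 i] by simp

lemma acoef_Suc_last: "1 \<le> n \<Longrightarrow> acoef w (Suc (m n)) n = 1"
  using stochastic unfolding stochastic_matrix_def acoef_def by (simp add: lessThan_Suc_atMost)

lemma acoef_add_le_one: "1 \<le> n \<Longrightarrow> i \<le> m n \<Longrightarrow> acoef w i n + w i n \<le> 1"
  using acoef_mono[of n "Suc i" "Suc (m n)"] acoef_Suc_last[of n] unfolding acoef_Suc by linarith

lemma DeltaQ_term_nonneg: "admissible m j \<Longrightarrow> 0 \<le> DeltaQ_term w j k"
  unfolding DeltaQ_term_def
  using admissibleD[of m j "k + 1"] by (intro mult_nonneg_nonneg prefix_weight_nonneg acoef_nonneg) auto

lemma DeltaQ_partial_sum_le:
  assumes "admissible m j"
  shows "(\<Sum>k<N. DeltaQ_term w j k) + prefix_weight w j N \<le> 1"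
proof (induction N)
  case (Suc N)
  have digit: "j (Suc N) \<le> m (Suc N)"
    using admissibleD[OF assms] by simp
  have "(\<Sum>k<Suc N. DeltaQ_term w j k) + prefix_weight w j (Suc N)
      = (\<Sum>k<N. DeltaQ_term w j k)
        + prefix_weight w j N * (acoef w (j (Suc N)) (Suc N) + w (j (Suc N)) (Suc N))"
    by (simp add: DeltaQ_term_def prod.nat_ivl_Suc' algebra_simps)
  also have "\<dots> \<le> (\<Sum>k<N. DeltaQ_term w j k) + prefix_weight w j N"
    using acoef_add_le_one[OF _ digit] prefix_weight_nonneg[OF assms]
    by (intro add_left_mono mult_left_le) auto
  finally show ?case
    using Suc.IH by simp
qed simp

lemma DeltaQ_partial_sum_le_one: "admissible m j \<Longrightarrow> (\<Sum>k<N. DeltaQ_term w j k) \<le> 1"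
  using DeltaQ_partial_sum_le[of j N] prefix_weight_nonneg[of j N] by linarith

lemma summable_DeltaQ_term: "admissible m j \<Longrightarrow> summable (DeltaQ_term w j)"
  using DeltaQ_partial_sum_le_one DeltaQ_term_nonneg by (intro summableI_nonneg_bounded)

lemma sums_DeltaQ: "admissible m j \<Longrightarrow> DeltaQ_term w j sums DeltaQ w j"
  unfolding DeltaQ_eq_suminf by (intro summable_sums summable_DeltaQ_term)

lemma DeltaQ_nonneg: "admissible m j \<Longrightarrow> 0 \<le> DeltaQ w j"
  unfolding DeltaQ_eq_suminf by (intro suminf_nonneg summable_DeltaQ_term DeltaQ_term_nonneg)

lemma DeltaQ_le_one: "admissible m j \<Longrightarrow> DeltaQ w j \<le> 1"
  unfolding DeltaQ_eq_suminf by (intro suminf_le_const summable_DeltaQ_term DeltaQ_partial_sum_le_one)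

lemma DeltaQ_last_digits:
  assumes last: "\<forall>n\<ge>1. j n = m n"
  shows "DeltaQ w j = 1"
proof -
  have adm: "admissible m j"
    using last unfolding admissible_def by simp
  have partial: "(\<Sum>k<N. DeltaQ_term w j k) = 1 - prefix_weight w j N" for N
  proof (induction N)
    case (Suc N)
    have "(\<Sum>k<Suc N. DeltaQ_term w j k)
        = 1 - prefix_weight w j N + acoef w (m (Suc N)) (Suc N) * prefix_weight w j N"
      using Suc.IH last by (simp add: DeltaQ_term_def)
    also have "\<dots> = 1 - prefix_weight w j N * w (m (Suc N)) (Suc N)"
      using acoef_Suc_last[of "Suc N"] unfolding acoef_Suc by (simp add: algebra_simps flip: eq_diff_eq)
    also have "\<dots> = 1 - prefix_weight w j (Suc N)"
      using last by (simp add: prod.nat_ivl_Suc')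
    finally show ?case .
  qed simp
  have "(\<lambda>N. 1 - prefix_weight w j N) \<longlonglongrightarrow> 1 - 0"
    by (intro tendsto_diff tendsto_const stochastic_matrix_prefix_weight_tendsto adm)
  then have "DeltaQ_term w j sums 1"
    unfolding sums_def partial by simp
  then show ?thesis
    unfolding DeltaQ_eq_suminf by (rule sums_unique[symmetric])
qed

end

lemma DeltaQ_zero_digits: "\<forall>n\<ge>1. j n = 0 \<Longrightarrow> DeltaQ w j = 0"
  unfolding DeltaQ_def by simp

lemma DeltaQ_cong: "\<forall>n\<ge>1. j n = j' n \<Longrightarrow> DeltaQ w j = DeltaQ w j'"
  unfolding DeltaQ_def by (intro arg_cong[where f = suminf] ext arg_cong2[where f = "(*)"] prod.cong) auto

lemma admissible_shift: "admissible m j \<Longrightarrow> admissible (shift_digits k m) (shift_digits k j)"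
  unfolding admissible_def by simp

lemma positive_matrix_shift: "positive_matrix m w \<Longrightarrow> positive_matrix (shift_digits k m) (shift_matrix k w)"
  unfolding positive_matrix_def by simp

lemma prefix_weight_add:
  "prefix_weight w j (k + n) = prefix_weight w j k * prefix_weight (shift_matrix k w) (shift_digits k j) n"
proof -
  have "prefix_weight w j (k + n) = prefix_weight w j k * (\<Prod>l\<in>{k + 1..k + n}. w (j l) l)"
    by (rule prod.ub_add_nat) simp
  also have "(\<Prod>l\<in>{k + 1..k + n}. w (j l) l) = prefix_weight (shift_matrix k w) (shift_digits k j) n"
    using prod.shift_bounds_cl_nat_ivl[of "\<lambda>l. w (j l) l" 1 k n] by (simp add: add.commute)
  finally show ?thesis .
qed

lemma DeltaQ_term_add:
  "DeltaQ_term w j (k + n) = prefix_weight w j k * DeltaQ_term (shift_matrix k w) (shift_digits k j) n"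
proof -
  have "acoef w (j (k + n + 1)) (k + n + 1) = acoef (shift_matrix k w) (j (n + 1 + k)) (n + 1)"
    by (simp add: acoef_def add_ac)
  then show ?thesis
    unfolding DeltaQ_term_def prefix_weight_add by simp
qed

lemma prefix_weight_pos: "positive_matrix m w \<Longrightarrow> admissible m j \<Longrightarrow> 0 < prefix_weight w j k"
  unfolding positive_matrix_def by (intro prod_pos) (simp add: admissibleD)

lemma acoef_pos: "positive_matrix m w \<Longrightarrow> 1 \<le> n \<Longrightarrow> 0 < i \<Longrightarrow> i \<le> Suc (m n) \<Longrightarrow> 0 < acoef w i n"
  unfolding positive_matrix_def acoef_def by (intro sum_pos) auto

text \<open>Prefixing an admissible sequence by digits of positive weight changes its
  products only by a positive factor.\<close>
lemma stochastic_matrix_shift: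
  assumes W: "stochastic_matrix m w"
  shows "stochastic_matrix (shift_digits k m) (shift_matrix k w)"
proof -
  obtain c where c: "\<forall>n\<ge>1. c n \<le> m n \<and> 0 < w (c n) n"
    using stochastic_matrix_ex_pos[OF W] by metis
  have "prefix_weight (shift_matrix k w) d \<longlonglongrightarrow> 0"
    if d: "admissible (shift_digits k m) d" for d
  proof -
    define d' where "d' n = (if n \<le> k then c n else d (n - k))" for n
    have "admissible m d'"
      unfolding admissible_def
    proof (intro allI impI)
      fix n :: nat
      assume "1 \<le> n"
      show "d' n \<le> m n"
      proof (cases "n \<le> k")
        case False
        then have "d (n - k) \<le> m (n - k + k)"
          using admissibleD[OF d, of "n - k"] by simp
        then show ?thesis
          using False by (simp add: d'_def)
      qed (use c \<open>1 \<le> n\<close> in \<open>simp add: d'_def\<close>)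
    qed
    then have "(\<lambda>N. prefix_weight w d' (k + N)) \<longlonglongrightarrow> 0"
      using LIMSEQ_ignore_initial_segment[OF stochastic_matrix_prefix_weight_tendsto[OF W], of d' k]
      by (simp add: add.commute)
    moreover have "prefix_weight w d' k = prefix_weight w c k"
      by (intro prod.cong) (auto simp: d'_def)
    moreover have "prefix_weight (shift_matrix k w) (shift_digits k d') N
        = prefix_weight (shift_matrix k w) d N" for N
      by (intro prod.cong) (auto simp: d'_def)
    ultimately have "(\<lambda>N. prefix_weight w c k * prefix_weight (shift_matrix k w) d N)
        \<longlonglongrightarrow> prefix_weight w c k * 0"
      unfolding prefix_weight_add by simp
    moreover have "prefix_weight w c k \<noteq> 0"
      using c by (intro prod_pos less_imp_neq[symmetric]) auto
    ultimately show ?thesis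
      using tendsto_mult_left_iff by blast
  qed
  then show ?thesis
    using W unfolding stochastic_matrix_def by simp
qed

lemma DeltaQ_split:
  assumes W: "stochastic_matrix m w" and j: "admissible m j"
  shows "DeltaQ w j = (\<Sum>n<k. DeltaQ_term w j n)
           + prefix_weight w j k * DeltaQ (shift_matrix k w) (shift_digits k j)"
proof -
  have "summable (DeltaQ_term (shift_matrix k w) (shift_digits k j))"
    by (rule summable_DeltaQ_term[OF stochastic_matrix_shift[OF W] admissible_shift[OF j]])
  moreover have "(\<lambda>n. DeltaQ_term w j (n + k))
      = (\<lambda>n. prefix_weight w j k * DeltaQ_term (shift_matrix k w) (shift_digits k j) n)"
    using DeltaQ_term_add[of w j k] by (simp only: add.commute)
  ultimately have "(\<Sum>n. DeltaQ_term w j (n + k))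
      = prefix_weight w j k * DeltaQ (shift_matrix k w) (shift_digits k j)"
    unfolding DeltaQ_eq_suminf by (simp add: suminf_mult)
  then show ?thesis
    using suminf_split_initial_segment[OF summable_DeltaQ_term[OF W j], of k]
    unfolding DeltaQ_eq_suminf by simp
qed

lemma DeltaQ_first_digit:
  "stochastic_matrix m w \<Longrightarrow> admissible m j \<Longrightarrow>
     DeltaQ w j = acoef w (j 1) 1 + w (j 1) 1 * DeltaQ (shift_matrix 1 w) (shift_digits 1 j)"
  using DeltaQ_split[of m w j 1] by (simp add: DeltaQ_term_def)

lemma DeltaQ_first_digit_bounds:
  assumes W: "stochastic_matrix m w" and j: "admissible m j"
  shows "acoef w (j 1) 1 \<le> DeltaQ w j" "DeltaQ w j \<le> acoef w (Suc (j 1)) 1"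
proof -
  have "0 \<le> w (j 1) 1"
    using stochastic_matrix_nonneg[OF W] admissibleD[OF j] by simp
  moreover have "0 \<le> DeltaQ (shift_matrix 1 w) (shift_digits 1 j)"
    "DeltaQ (shift_matrix 1 w) (shift_digits 1 j) \<le> 1"
    using DeltaQ_nonneg[OF stochastic_matrix_shift[OF W] admissible_shift[OF j], of 1]
      DeltaQ_le_one[OF stochastic_matrix_shift[OF W] admissible_shift[OF j], of 1] by auto
  ultimately show "acoef w (j 1) 1 \<le> DeltaQ w j" "DeltaQ w j \<le> acoef w (Suc (j 1)) 1"
    unfolding DeltaQ_first_digit[OF W j] acoef_Suc by (simp_all add: mult_left_le)
qed

lemma DeltaQ_le_if_first_digit_less:
  assumes W: "stochastic_matrix m w" and j: "admissible m j" and j': "admissible m j'"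
    and less: "j 1 < j' 1"
  shows "DeltaQ w j \<le> DeltaQ w j'"
proof -
  have "acoef w (Suc (j 1)) 1 \<le> acoef w (j' 1) 1"
    using acoef_mono[OF W, of 1 "Suc (j 1)" "j' 1"] admissibleD[OF j', of 1] less by simp
  then show ?thesis
    using DeltaQ_first_digit_bounds[OF W j] DeltaQ_first_digit_bounds[OF W j'] by linarith
qed

context
  fixes m :: "nat \<Rightarrow> nat" and q :: "nat \<Rightarrow> nat \<Rightarrow> real"
  assumes stochastic: "stochastic_matrix m q" and positive: "positive_matrix m q"
begin

lemma DeltaQ_eq_one_first_digit:
  assumes j: "admissible m j" and one: "DeltaQ q j = 1"
  shows "j 1 = m 1"
proof (rule ccontr)
  assume "j 1 \<noteq> m 1"
  then have "Suc (j 1) \<le> m 1"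
    using admissibleD[OF j, of 1] by simp
  then have "acoef q (Suc (j 1)) 1 + q (Suc (j 1)) 1 \<le> 1" "0 < q (Suc (j 1)) 1"
    using acoef_add_le_one[OF stochastic] positive unfolding positive_matrix_def by auto
  then show False
    using DeltaQ_first_digit_bounds(2)[OF stochastic j] one by linarith
qed

lemma DeltaQ_eq_zero_first_digit:
  assumes j: "admissible m j" and zero: "DeltaQ q j = 0"
  shows "j 1 = 0"
  using DeltaQ_first_digit_bounds(1)[OF stochastic j] acoef_pos[OF positive, of 1 "j 1"]
    admissibleD[OF j, of 1] zero by fastforce

lemma DeltaQ_shift_eq_one:
  assumes j: "admissible m j" and one: "DeltaQ q j = 1"
  shows "DeltaQ (shift_matrix k q) (shift_digits k j) = 1"
proof -
  let ?P = "prefix_weight q j k" and ?D = "DeltaQ (shift_matrix k q) (shift_digits k j)"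
  have "?P * 1 \<le> ?P * ?D"
    using DeltaQ_split[OF stochastic j, of k] DeltaQ_partial_sum_le[OF stochastic j, of k] one
    by simp
  then have "1 \<le> ?D"
    using mult_le_cancel_left_pos[OF prefix_weight_pos[OF positive j, of k]] by blast
  then show ?thesis
    using DeltaQ_le_one[OF stochastic_matrix_shift[OF stochastic] admissible_shift[OF j], of k] by simp
qed

lemma DeltaQ_shift_eq_zero:
  assumes j: "admissible m j" and zero: "DeltaQ q j = 0"
  shows "DeltaQ (shift_matrix k q) (shift_digits k j) = 0"
proof -
  let ?P = "prefix_weight q j k" and ?D = "DeltaQ (shift_matrix k q) (shift_digits k j)"
  have "0 \<le> (\<Sum>n<k. DeltaQ_term q j n)"
    by (intro sum_nonneg DeltaQ_term_nonneg[OF stochastic j])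
  then have "?P * ?D \<le> ?P * 0"
    using DeltaQ_split[OF stochastic j, of k] zero by simp
  then have "?D \<le> 0"
    using mult_le_cancel_left_pos[OF prefix_weight_pos[OF positive j, of k]] by blast
  then show ?thesis
    using DeltaQ_nonneg[OF stochastic_matrix_shift[OF stochastic] admissible_shift[OF j], of k] by simp
qed

end

lemma DeltaQ_eq_one_imp_last_digits:
  assumes Q: "stochastic_matrix m q" "positive_matrix m q"
    and j: "admissible m j" and one: "DeltaQ q j = 1" and n: "1 \<le> n"
  shows "j n = m n"
proof -
  obtain k where k: "n = 1 + k"
    using n by (metis le_add_diff_inverse)
  have "shift_digits k j 1 = shift_digits k m 1"
    by (rule DeltaQ_eq_one_first_digit[OF stochastic_matrix_shift[OF Q(1)] positive_matrix_shift[OF Q(2)]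
          admissible_shift[OF j] DeltaQ_shift_eq_one[OF Q j one]])
  then show ?thesis
    unfolding k by (simp add: add.commute)
qed

lemma DeltaQ_eq_zero_imp_zero_digits:
  assumes Q: "stochastic_matrix m q" "positive_matrix m q"
    and j: "admissible m j" and zero: "DeltaQ q j = 0" and n: "1 \<le> n"
  shows "j n = 0"
proof -
  obtain k where k: "n = 1 + k"
    using n by (metis le_add_diff_inverse)
  have "shift_digits k j 1 = 0"
    by (rule DeltaQ_eq_zero_first_digit[OF stochastic_matrix_shift[OF Q(1)] positive_matrix_shift[OF Q(2)]
          admissible_shift[OF j] DeltaQ_shift_eq_zero[OF Q j zero]])
  then show ?thesis
    unfolding k by (simp add: add.commute)
qed

lemma DeltaQ_tie_first_digit:
  assumes Q: "stochastic_matrix m q" "positive_matrix m q"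
    and j: "admissible m j" and j': "admissible m j'"
    and less: "j 1 < j' 1" and tie: "DeltaQ q j = DeltaQ q j'"
  shows "j' 1 = Suc (j 1)" "DeltaQ (shift_matrix 1 q) (shift_digits 1 j) = 1"
    "DeltaQ (shift_matrix 1 q) (shift_digits 1 j') = 0"
proof -
  have pos: "0 < q i 1" if "i \<le> m 1" for i
    using Q(2) that unfolding positive_matrix_def by simp
  have digits: "j 1 \<le> m 1" "j' 1 \<le> m 1"
    using admissibleD[OF j] admissibleD[OF j'] by auto
  have mono: "acoef q (Suc (j 1)) 1 \<le> acoef q (j' 1) 1"
    using acoef_mono[OF Q(1), of 1 "Suc (j 1)" "j' 1"] less digits by simp
  have eq: "DeltaQ q j = acoef q (Suc (j 1)) 1" "acoef q (j' 1) 1 = DeltaQ q j'"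
    using DeltaQ_first_digit_bounds[OF Q(1) j] DeltaQ_first_digit_bounds[OF Q(1) j'] mono tie
    by linarith+
  show "j' 1 = Suc (j 1)"
  proof (rule ccontr)
    assume "j' 1 \<noteq> Suc (j 1)"
    then have "acoef q (Suc (Suc (j 1))) 1 \<le> acoef q (j' 1) 1"
      using acoef_mono[OF Q(1), of 1 "Suc (Suc (j 1))" "j' 1"] less digits by simp
    then show False
      using eq tie pos[of "Suc (j 1)"] less digits unfolding acoef_Suc[of q "Suc (j 1)"] by simp
  qed
  have "q (j 1) 1 * DeltaQ (shift_matrix 1 q) (shift_digits 1 j) = q (j 1) 1 * 1"
    using eq(1) unfolding DeltaQ_first_digit[OF Q(1) j] acoef_Suc by simp
  then show "DeltaQ (shift_matrix 1 q) (shift_digits 1 j) = 1"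
    using pos[OF digits(1)] by (simp only: mult_cancel_left) simp
  have "q (j' 1) 1 * DeltaQ (shift_matrix 1 q) (shift_digits 1 j') = 0"
    using eq(2) unfolding DeltaQ_first_digit[OF Q(1) j'] by simp
  then show "DeltaQ (shift_matrix 1 q) (shift_digits 1 j') = 0"
    using pos[OF digits(2)] by simp
qed

lemma DeltaQ_tie_first_digit_transfer:
  assumes Q: "stochastic_matrix m q" "positive_matrix m q" and P: "stochastic_matrix m p"
    and j: "admissible m j" and j': "admissible m j'"
    and less: "j 1 < j' 1" and tie: "DeltaQ q j = DeltaQ q j'"
  shows "DeltaQ p j = DeltaQ p j'"
proof -
  note shifted_Q = stochastic_matrix_shift[OF Q(1), of 1] positive_matrix_shift[OF Q(2), of 1]
  note ends = DeltaQ_tie_first_digit[OF Q j j' less tie]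
  have "DeltaQ (shift_matrix 1 p) (shift_digits 1 j) = 1"
    using DeltaQ_eq_one_imp_last_digits[OF shifted_Q admissible_shift[OF j] ends(2)]
    by (intro DeltaQ_last_digits[OF stochastic_matrix_shift[OF P]]) blast
  moreover have "DeltaQ (shift_matrix 1 p) (shift_digits 1 j') = 0"
    using DeltaQ_eq_zero_imp_zero_digits[OF shifted_Q admissible_shift[OF j'] ends(3)]
    by (intro DeltaQ_zero_digits) blast
  ultimately show ?thesis
    unfolding DeltaQ_first_digit[OF P j] DeltaQ_first_digit[OF P j'] ends(1) acoef_Suc by simp
qed

lemma DeltaQ_diff_common_prefix:
  assumes W: "stochastic_matrix m w" and j: "admissible m j" and j': "admissible m j'"
    and common: "\<forall>l\<in>{1..k}. j l = j' l"
  shows "DeltaQ w j - DeltaQ w j' = prefix_weight w j k *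
           (DeltaQ (shift_matrix k w) (shift_digits k j) - DeltaQ (shift_matrix k w) (shift_digits k j'))"
proof -
  have weight: "prefix_weight w j n = prefix_weight w j' n" if "n \<le> k" for n
    using common that by (intro prod.cong) auto
  have "(\<Sum>n<k. DeltaQ_term w j n) = (\<Sum>n<k. DeltaQ_term w j' n)"
    using weight common by (intro sum.cong) (auto simp: DeltaQ_term_def)
  then show ?thesis
    using DeltaQ_split[OF W j, of k] DeltaQ_split[OF W j', of k] weight[of k]
    by (simp add: right_diff_distrib)
qed

lemma DeltaQ_le_lex:
  assumes W: "stochastic_matrix m w" and j: "admissible m j" and j': "admissible m j'"
    and common: "\<forall>l\<in>{1..k}. j l = j' l" and less: "j (Suc k) < j' (Suc k)"
  shows "DeltaQ w j \<le> DeltaQ w j'"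
proof -
  have "DeltaQ (shift_matrix k w) (shift_digits k j) \<le> DeltaQ (shift_matrix k w) (shift_digits k j')"
    using DeltaQ_le_if_first_digit_less[OF stochastic_matrix_shift[OF W] admissible_shift[OF j]
        admissible_shift[OF j']] less by simp
  then have "prefix_weight w j k *
      (DeltaQ (shift_matrix k w) (shift_digits k j) - DeltaQ (shift_matrix k w) (shift_digits k j')) \<le> 0"
    using prefix_weight_nonneg[OF W j, of k] by (intro mult_nonneg_nonpos) simp_all
  then show ?thesis
    using DeltaQ_diff_common_prefix[OF W j j' common] by linarith
qed

lemma DeltaQ_tie_lex_transfer:
  assumes Q: "stochastic_matrix m q" "positive_matrix m q" and P: "stochastic_matrix m p"
    and j: "admissible m j" and j': "admissible m j'"
    and common: "\<forall>l\<in>{1..k}. j l = j' l" and less: "j (Suc k) < j' (Suc k)"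
    and tie: "DeltaQ q j = DeltaQ q j'"
  shows "DeltaQ p j = DeltaQ p j'"
proof -
  let ?D = "DeltaQ (shift_matrix k q) (shift_digits k j)"
    and ?D' = "DeltaQ (shift_matrix k q) (shift_digits k j')"
  define c where "c = prefix_weight q j k"
  have "0 < c"
    unfolding c_def by (rule prefix_weight_pos[OF Q(2) j])
  moreover have "c * (?D - ?D') = 0"
    using DeltaQ_diff_common_prefix[OF Q(1) j j' common] tie unfolding c_def by linarith
  ultimately have "?D = ?D'"
    by simp
  then have "DeltaQ (shift_matrix k p) (shift_digits k j) = DeltaQ (shift_matrix k p) (shift_digits k j')"
    using DeltaQ_tie_first_digit_transfer[OF stochastic_matrix_shift[OF Q(1)] positive_matrix_shift[OF Q(2)]
        stochastic_matrix_shift[OF P] admissible_shift[OF j] admissible_shift[OF j']] less by simp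
  then show ?thesis
    using DeltaQ_diff_common_prefix[OF P j j' common] by simp
qed

lemma first_difference:
  assumes "\<not> (\<forall>n\<ge>1. j n = j' n)"
  obtains k where "\<forall>l\<in>{1..k}. j l = j' l" "j (Suc k) \<noteq> j' (Suc k)"
proof -
  obtain n where "1 \<le> n" "j n \<noteq> j' n"
    using assms by auto
  then have "\<exists>k. j (Suc k) \<noteq> j' (Suc k)"
    by (intro exI[of _ "n - 1"]) simp
  then obtain k where differ: "j (Suc k) \<noteq> j' (Suc k)" and before: "\<forall>k'<k. j (Suc k') = j' (Suc k')"
    unfolding exists_least_iff[of "\<lambda>k. j (Suc k) \<noteq> j' (Suc k)"] by blast
  show thesis
  proof (rule that[OF _ differ], intro ballI)
    fix l
    assume "l \<in> {1..k}"
    then show "j l = j' l"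
      using before[rule_format, of "l - 1"] by auto
  qed
qed

lemma DeltaQ_mono_transfer:
  assumes Q: "stochastic_matrix m q" "positive_matrix m q" and P: "stochastic_matrix m p"
    and j: "admissible m j" and j': "admissible m j'" and le: "DeltaQ q j \<le> DeltaQ q j'"
  shows "DeltaQ p j \<le> DeltaQ p j'"
proof (cases "\<forall>n\<ge>1. j n = j' n")
  case True
  then show ?thesis
    using DeltaQ_cong[OF True, of p] by simp
next
  case False
  then obtain k where common: "\<forall>l\<in>{1..k}. j l = j' l" and differ: "j (Suc k) \<noteq> j' (Suc k)"
    by (rule first_difference)
  show ?thesis
  proof (cases "j (Suc k) < j' (Suc k)")
    case True
    then show ?thesis
      by (rule DeltaQ_le_lex[OF P j j' common])
  next
    case False
    then have less: "j' (Suc k) < j (Suc k)"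
      using differ by simp
    have common': "\<forall>l\<in>{1..k}. j' l = j l"
      using common by simp
    have "DeltaQ q j' = DeltaQ q j"
      using DeltaQ_le_lex[OF Q(1) j' j common' less] le by simp
    then show ?thesis
      using DeltaQ_tie_lex_transfer[OF Q P j' j common' less] by simp
  qed
qed

lemma greedy_digit:
  assumes W: "stochastic_matrix m w" and n: "1 \<le> n" and r: "0 \<le> r" "r \<le> 1"
  obtains i where "i \<le> m n" "acoef w i n \<le> r" "r \<le> acoef w (Suc i) n"
proof -
  have "\<exists>i. r \<le> acoef w (Suc i) n"
    using acoef_Suc_last[OF W n] r by metis
  then obtain i where up: "r \<le> acoef w (Suc i) n" and least: "\<forall>i'<i. \<not> r \<le> acoef w (Suc i') n"
    unfolding exists_least_iff[of "\<lambda>i. r \<le> acoef w (Suc i) n"] by blast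
  have "i \<le> m n"
  proof (rule ccontr)
    assume "\<not> i \<le> m n"
    then show False
      using least[rule_format, of "m n"] acoef_Suc_last[OF W n] r by simp
  qed
  moreover have "acoef w i n \<le> r"
  proof (cases i)
    case (Suc i')
    then show ?thesis
      using least by auto
  qed (simp add: r)
  ultimately show thesis
    using that up by blast
qed

text \<open>If the weight v vanishes then r = a, so the junk quotient (r - a) / 0 = 0 still fits.\<close>
lemma greedy_remainder:
  fixes a r v :: real
  assumes "0 \<le> v" "a \<le> r" "r \<le> a + v"
  shows "a + v * ((r - a) / v) = r" "0 \<le> (r - a) / v" "(r - a) / v \<le> 1"
  using assms by (auto simp: divide_le_eq_1)

lemma DeltaQ_surj:
  assumes W: "stochastic_matrix m w" and x: "0 \<le> x" "x \<le> 1"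
  obtains j where "admissible m j" "DeltaQ w j = x"
proof -
  have "\<exists>i. i \<le> m n \<and> acoef w i n \<le> r \<and> r \<le> acoef w (Suc i) n"
    if "1 \<le> n" "0 \<le> r" "r \<le> 1" for n r
    by (rule greedy_digit[OF W that]) blast
  then obtain dig where dig: "\<And>n r. 1 \<le> n \<Longrightarrow> 0 \<le> r \<Longrightarrow> r \<le> 1 \<Longrightarrow>
      dig n r \<le> m n \<and> acoef w (dig n r) n \<le> r \<and> r \<le> acoef w (Suc (dig n r)) n"
    by metis
  define rem where
    "rem = rec_nat x (\<lambda>k r. (r - acoef w (dig (Suc k) r) (Suc k)) / w (dig (Suc k) r) (Suc k))"
  define j where "j n = dig n (rem (n - 1))" for n
  have rem_Suc: "rem (Suc k) = (rem k - acoef w (j (Suc k)) (Suc k)) / w (j (Suc k)) (Suc k)" for k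
    by (simp add: rem_def j_def)
  have step: "j (Suc k) \<le> m (Suc k) \<and> 0 \<le> rem (Suc k) \<and> rem (Suc k) \<le> 1 \<and>
      acoef w (j (Suc k)) (Suc k) + w (j (Suc k)) (Suc k) * rem (Suc k) = rem k"
    if "0 \<le> rem k" "rem k \<le> 1" for k
  proof -
    let ?i = "j (Suc k)"
    have i: "?i \<le> m (Suc k)" "acoef w ?i (Suc k) \<le> rem k" "rem k \<le> acoef w ?i (Suc k) + w ?i (Suc k)"
      using dig[of "Suc k" "rem k"] that by (simp_all add: j_def acoef_Suc)
    have "0 \<le> w ?i (Suc k)"
      using stochastic_matrix_nonneg[OF W _ i(1)] by simp
    from greedy_remainder[OF this i(2,3)] i(1) show ?thesis
      unfolding rem_Suc by simp
  qed
  have rem_bounds: "0 \<le> rem k \<and> rem k \<le> 1" for k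
    by (induction k) (use x step in \<open>simp_all add: rem_def\<close>)
  have adm: "admissible m j"
    unfolding admissible_def
  proof (intro allI impI)
    fix n :: nat
    assume "1 \<le> n"
    then obtain k where "n = Suc k"
      by (cases n) auto
    then show "j n \<le> m n"
      using step rem_bounds by blast
  qed
  have partial: "(\<Sum>k<N. DeltaQ_term w j k) = x - prefix_weight w j N * rem N" for N
  proof (induction N)
    case (Suc N)
    have digit: "acoef w (j (Suc N)) (Suc N) + w (j (Suc N)) (Suc N) * rem (Suc N) = rem N"
      using step rem_bounds by blast
    show ?case
      using Suc.IH by (simp add: DeltaQ_term_def prod.nat_ivl_Suc' algebra_simps flip: digit)
  qed (simp add: rem_def)
  have "(\<lambda>N. prefix_weight w j N * rem N) \<longlonglongrightarrow> 0"
  proof (rule tendsto_sandwich[OF _ _ tendsto_const stochastic_matrix_prefix_weight_tendsto[OF W adm]])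
    show "\<forall>\<^sub>F N in sequentially. 0 \<le> prefix_weight w j N * rem N"
      using prefix_weight_nonneg[OF W adm] rem_bounds by (simp add: always_eventually)
    show "\<forall>\<^sub>F N in sequentially. prefix_weight w j N * rem N \<le> prefix_weight w j N"
      using prefix_weight_nonneg[OF W adm] rem_bounds by (intro always_eventually allI mult_left_le) auto
  qed
  then have "(\<lambda>N. x - prefix_weight w j N * rem N) \<longlonglongrightarrow> x - 0"
    by (intro tendsto_diff tendsto_const)
  then have "DeltaQ_term w j sums x"
    unfolding sums_def partial by simp
  then show thesis
    using that[OF adm] sums_unique[symmetric] unfolding DeltaQ_eq_suminf by blast
qed

lemma mono_on_onto_left_continuous:
  fixes f :: "real \<Rightarrow> real"
  assumes mono: "mono_on {a..b} f" and onto: "{f a..f b} \<subseteq> f ` {a..b}"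
    and x: "x \<in> {a..b}" and e: "0 < e"
  obtains d where "0 < d" "\<And>y. y \<in> {a..b} \<Longrightarrow> x - d < y \<Longrightarrow> f x - e < f y"
proof (cases "f x - e < f a")
  case True
  show thesis
  proof (rule that[of 1])
    fix y
    assume "y \<in> {a..b}"
    then have "f a \<le> f y"
      using mono_onD[OF mono, of a y] by auto
    then show "f x - e < f y"
      using True by simp
  qed simp
next
  case False
  moreover have "f x \<le> f b"
    using mono_onD[OF mono x, of b] x by simp
  ultimately have "f x - e / 2 \<in> f ` {a..b}"
    using onto e by auto
  then obtain z where z: "f x - e / 2 = f z" "z \<in> {a..b}"
    by (rule imageE)
  have "z < x"
    using mono_onD[OF mono x z(2)] z e by force
  show thesis
  proof (rule that[of "x - z"])
    fix y
    assume "y \<in> {a..b}" "x - (x - z) < y"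
    then show "f x - e < f y"
      using mono_onD[OF mono z(2), of y] z e by simp
  qed (use \<open>z < x\<close> in simp)
qed

text \<open>The right-hand estimate is the left-hand one for t \<mapsto> - f (- t) on {-b..-a}.\<close>
lemma mono_on_onto_imp_continuous_on:
  fixes f :: "real \<Rightarrow> real"
  assumes mono: "mono_on {a..b} f" and onto: "{f a..f b} \<subseteq> f ` {a..b}"
  shows "continuous_on {a..b} f"
  unfolding continuous_on_iff
proof (intro ballI allI impI)
  fix x e :: real
  assume x: "x \<in> {a..b}" and e: "0 < e"
  obtain d1 where d1: "0 < d1" "\<And>y. y \<in> {a..b} \<Longrightarrow> x - d1 < y \<Longrightarrow> f x - e < f y"
    using mono_on_onto_left_continuous[OF mono onto x e] by blast
  let ?g = "\<lambda>t. - f (- t)"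
  have "mono_on {-b..-a} ?g"
    using mono unfolding mono_on_def by auto
  moreover have "{?g (-b)..?g (-a)} \<subseteq> ?g ` {-b..-a}"
  proof
    fix v
    assume "v \<in> {?g (-b)..?g (-a)}"
    then have "-v \<in> f ` {a..b}"
      using onto by auto
    then obtain y where "-v = f y" "y \<in> {a..b}"
      by (rule imageE)
    then show "v \<in> ?g ` {-b..-a}"
      by (intro image_eqI[of _ _ "-y"]) auto
  qed
  moreover have "-x \<in> {-b..-a}"
    using x by simp
  ultimately obtain d2 where d2: "0 < d2" "\<And>t. t \<in> {-b..-a} \<Longrightarrow> -x - d2 < t \<Longrightarrow> ?g (-x) - e < ?g t"
    using mono_on_onto_left_continuous[of "-b" "-a" ?g "-x" e] e by blast
  show "\<exists>d>0. \<forall>y\<in>{a..b}. dist y x < d \<longrightarrow> dist (f y) (f x) < e"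
  proof (intro exI[of _ "min d1 d2"] conjI ballI impI)
    fix y
    assume y: "y \<in> {a..b}" and "dist y x < min d1 d2"
    then have near: "x - d1 < y" "-x - d2 < -y"
      by (auto simp: dist_real_def)
    show "dist (f y) (f x) < e"
    proof (cases "y \<le> x")
      case True
      then show ?thesis
        using d1(2)[OF y near(1)] mono_onD[OF mono y x] by (simp add: dist_real_def)
    next
      case False
      then show ?thesis
        using d2(2)[of "-y"] near(2) y mono_onD[OF mono x y] by (simp add: dist_real_def)
    qed
  qed (use d1 d2 in simp)
qed

text \<open>The function x \<mapsto> Delta_p (Delta_q\<inverse> x); it is well defined on [0, 1] by
  DeltaQ_mono_transfer.\<close>
definition DeltaQ_transfer ::
  "(nat \<Rightarrow> nat) \<Rightarrow> (nat \<Rightarrow> nat \<Rightarrow> real) \<Rightarrow> (nat \<Rightarrow> nat \<Rightarrow> real) \<Rightarrow> real \<Rightarrow> real" where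
  "DeltaQ_transfer m q p x = DeltaQ p (SOME j. admissible m j \<and> DeltaQ q j = x)"

context
  fixes m :: "nat \<Rightarrow> nat" and q p :: "nat \<Rightarrow> nat \<Rightarrow> real"
  assumes Q: "stochastic_matrix m q" "positive_matrix m q" and P: "stochastic_matrix m p"
begin

lemma DeltaQ_transfer_DeltaQ:
  assumes j: "admissible m j"
  shows "DeltaQ_transfer m q p (DeltaQ q j) = DeltaQ p j"
proof -
  let ?j = "SOME j'. admissible m j' \<and> DeltaQ q j' = DeltaQ q j"
  have "admissible m ?j \<and> DeltaQ q ?j = DeltaQ q j"
    by (rule someI[of _ j]) (simp add: j)
  then show ?thesis
    unfolding DeltaQ_transfer_def
    using DeltaQ_mono_transfer[OF Q P, of ?j j] DeltaQ_mono_transfer[OF Q P, of j ?j] j by force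
qed

lemma DeltaQ_transfer_0: "DeltaQ_transfer m q p 0 = 0"
  using DeltaQ_transfer_DeltaQ[of "\<lambda>_. 0"] DeltaQ_zero_digits[of "\<lambda>_. 0"]
  by (simp add: admissible_def)

lemma DeltaQ_transfer_1: "DeltaQ_transfer m q p 1 = 1"
  using DeltaQ_transfer_DeltaQ[of m] DeltaQ_last_digits[OF Q(1), of m] DeltaQ_last_digits[OF P, of m]
  by (simp add: admissible_def)

lemma mono_on_DeltaQ_transfer: "mono_on {0..1} (DeltaQ_transfer m q p)"
proof (rule mono_onI)
  fix x y :: real
  assume x: "x \<in> {0..1}" and y: "y \<in> {0..1}" and le: "x \<le> y"
  obtain jx where jx: "admissible m jx" "DeltaQ q jx = x"
    by (rule DeltaQ_surj[OF Q(1), of x]) (use x in auto)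
  obtain jy where jy: "admissible m jy" "DeltaQ q jy = y"
    by (rule DeltaQ_surj[OF Q(1), of y]) (use y in auto)
  show "DeltaQ_transfer m q p x \<le> DeltaQ_transfer m q p y"
    using DeltaQ_mono_transfer[OF Q P jx(1) jy(1)] le
    unfolding jx(2)[symmetric] jy(2)[symmetric] DeltaQ_transfer_DeltaQ[OF jx(1)]
      DeltaQ_transfer_DeltaQ[OF jy(1)] by simp
qed

lemma DeltaQ_transfer_onto: "{0..1} \<subseteq> DeltaQ_transfer m q p ` {0..1}"
proof
  fix y :: real
  assume y: "y \<in> {0..1}"
  obtain j where j: "admissible m j" "DeltaQ p j = y"
    by (rule DeltaQ_surj[OF P, of y]) (use y in auto)
  then have "DeltaQ q j \<in> {0..1}"
    using DeltaQ_nonneg[OF Q(1)] DeltaQ_le_one[OF Q(1)] by simp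
  moreover have "y = DeltaQ_transfer m q p (DeltaQ q j)"
    using DeltaQ_transfer_DeltaQ[OF j(1)] j(2) by simp
  ultimately show "y \<in> DeltaQ_transfer m q p ` {0..1}"
    by (rule rev_image_eqI)
qed

lemma continuous_on_DeltaQ_transfer: "continuous_on {0..1} (DeltaQ_transfer m q p)"
  using mono_on_onto_imp_continuous_on[OF mono_on_DeltaQ_transfer]
    DeltaQ_transfer_onto DeltaQ_transfer_0 DeltaQ_transfer_1 by simp

end

abbreviation nega_digits :: "(nat \<Rightarrow> nat) \<Rightarrow> (nat \<Rightarrow> nat) \<Rightarrow> nat \<Rightarrow> nat" where
  "nega_digits m i \<equiv> \<lambda>n. if even n then m n - i n else i n"

lemma admissible_nega_digits: "admissible m i \<Longrightarrow> admissible m (nega_digits m i)"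
  unfolding admissible_def by simp

lemma Fterm_eq_DeltaQ_term: "Fterm m p i = DeltaQ_term p (nega_digits m i)"
  unfolding Fterm_def DeltaQ_term_def betatilde_def ptilde_def beta_def acoef_def
  by (intro ext arg_cong2[where f = "(*)"] prod.cong) auto

theorem mainTheorem9:
  fixes m :: "nat \<Rightarrow> nat" and q p :: "nat \<Rightarrow> nat \<Rightarrow> real"
  assumes "Qmatrix m q"
    and "Pmatrix m p"
    and "\<forall>n\<ge>1. \<forall>i\<le>m n. p i n \<ge> 0"
  shows "\<exists>F :: real \<Rightarrow> real.
           (\<forall>x\<in>{0..1}. \<forall>i. nega_rep m q x i \<longrightarrow> Fterm m p i sums F x) \<and>
           F 0 = 0 \<and> F 1 = 1 \<and> mono_on {0..1} F \<and> continuous_on {0..1} F"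
proof -
  have Q: "stochastic_matrix m q" "positive_matrix m q"
    using assms(1) by (simp_all add: Qmatrix_iff)
  have P: "stochastic_matrix m p"
    using Pmatrix_imp_stochastic_matrix[OF assms(2,3)] .
  have "Fterm m p i sums DeltaQ_transfer m q p x" if "nega_rep m q x i" for x i
  proof -
    have "admissible m (nega_digits m i)" "x = DeltaQ q (nega_digits m i)"
      using that admissible_nega_digits unfolding nega_rep_def by simp_all
    then show ?thesis
      unfolding Fterm_eq_DeltaQ_term using sums_DeltaQ[OF P] DeltaQ_transfer_DeltaQ[OF Q P] by simp
  qed
  then show ?thesis
    using DeltaQ_transfer_0[OF Q P] DeltaQ_transfer_1[OF Q P] mono_on_DeltaQ_transfer[OF Q P]
      continuous_on_DeltaQ_transfer[OF Q P] by blast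
qed

end
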